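(* Let $\varphi$ be an individually rational rule. Then $\varphi$ is pick-an-object implementable in perfect ex-post equilibrium if and only if $\varphi$ is strategy-proof and satisfies monotonic discoverability. Moreover, for every rule that is pick-an-object implementable in perfect ex-post equilibrium, straightforward strategies constitute a perfect ex-post equilibrium profile of every pick-an-object mechanism that sequentializes that rule.
   Context: Let $A=\{a_1,\dots,a_n\}$ be a finite set of agents and $O=\{o_1,\dots,o_m\}\cup\{\emptyset\}$ a finite set of object types ($\emptyset$ the null object). Each agent $a$ has a strict preference $P_a$ over $O$ with weak version $R_a$. $\mathbb{P}$ is the set of strict preferences over $O$, $\mathcal{P}=\mathbb{P}^n$ the set of profiles; $P_{-a}$ denotes the preferences of agents other than $a$. An allocation is a function $\mu:A\to O$. A rule is $\varphi:\mathcal{P}\to\{\text{allocations}\}$, $\varphi_a(P)=\varphi(P)(a)$. $\varphi$ is individually rational if $\varphi_a(P)R_a\emptyset$ always; strategy-proof if $\varphi_a(P_a,P_{-a})\,R_a\,\varphi_a(P'_a,P_{-a})$ for all $a$, $P$, $P'_a\in\mathbb{P}$. Monotonic discoverability: for $P\in\mathcal{P}$ and allocation $\mu$, $\mathcal{L}(P,\mu)$ is the set of profiles $P'$ such that for every agent $a$, $P'_a$ agrees with $P_a$ on $\mu(a)$ and on all objects $P_a$ ranks above $\mu(a)$ (same set above $\mu(a)$, same order), possibly differing below. $\varphi$ satisfies monotonic discoverability if for every $\mu$ and $P$, either $\varphi(P)=\mu$ or some agent $a^*$ has $\varphi_{a^*}(P')\neq\mu(a^* )$ for all $P'\in\mathcal{L}(P,\mu)$.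 Pick-an-object (PAO) mechanisms: a choice history is a finite (possibly empty) sequence $((\Omega_1,\omega_1),\dots,(\Omega_k,\omega_k))$ with $\Omega_j\subseteq O$, $\omega_j\in\Omega_j$; $\omega_k$ is its last choice. A collective history is an $n$-tuple of choice histories; $h^{A-\emptyset}$ is the tuple of empty ones. A menu function $\mathbb{S}$ maps collective histories to $n$-tuples of subsets of $O$ such that the menus in $\mathbb{S}(h^{A-\emptyset})$ are non-empty and, for other collective histories, agent $i$'s menu is a subset of $\Omega_k\setminus\{\omega_k\}$, where $(\Omega_k,\omega_k)$ is the last entry of $i$'s history. The PAO mechanism $\mathbb{S}$: in period 1 every agent chooses from her initial menu; in each later period, given the current collective history $h^A$, if all menus in $\mathbb{S}(h^A)$ are empty the procedure stops and each agent receives her last chosen object, otherwise each agent with a non-empty menu chooses an element of it; each (menu, choice) is appended to the chooser's history. $H^A_{\mathbb{S}}$ is the set of collective histories that can arise; $H^A_{\mathbb{S}}(a)$ the set of agent $a$'s individual histories within them. The straightforward strategy w.r.t. $P_a$ chooses the $P_a$-best element of every menu. $\mathbb{S}$ sequentializes $\varphi$ if, for every $P$, when all agents play straightforward strategies w.r.t. $P$ the outcome is $\varphi(P)$. Strategies and equilibrium: a strategy for agent $a$ maps each pair $(h,\Omega)$ of an own history $h\in H^A_{\mathbb{S}}(a)\cup\{\emptyset\}$ and a menu $\Omega$ to an element of $\Omega$ (so that the extended history is in $H^A_{\mathbb{S}}(a)$). A type-strategy $\Sigma_a$ maps each preference to a strategy. For $h^A\in H^A_{\mathbb{S}}\cup\{h^{A-\emptyset}\}$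 and strategy profile $\sigma$, $\mathcal{O}|_{h^A}(\sigma)$ is the allocation produced by running $\mathbb{S}$ from $h^A$ with agents following $\sigma$, and $\mathcal{O}_a|_{h^A}(\sigma)$ is agent $a$'s assignment. A type-strategy profile $(\Sigma_a)_{a\in A}$ is a perfect ex-post equilibrium if for every $a\in A$, $h^A\in H^A_{\mathbb{S}}\cup\{h^{A-\emptyset}\}$, strategy $\sigma'_a$, and $P\in\mathcal{P}$: $\mathcal{O}_a|_{h^A}(\Sigma_a(P_a),(\Sigma_{a'}(P_{a'}))_{a'\neq a})\ R_a\ \mathcal{O}_a|_{h^A}(\sigma'_a,(\Sigma_{a'}(P_{a'}))_{a'\neq a})$. A rule $\varphi$ is pick-an-object implementable in perfect ex-post equilibrium if some PAO mechanism sequentializes $\varphi$ and, in it, the profile in which each agent of type $P_a$ plays the straightforward strategy w.r.t. $P_a$ is a perfect ex-post equilibrium. *)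

theory Defs
  imports Main
begin

text \<open>Objects: the type 'o option; None is the null object. A strict preference
is a strict linear order P on the object set, P x y meaning x strictly preferred to y.\<close>

type_synonym 'x pref = "'x \<Rightarrow> 'x \<Rightarrow> bool"

definition strict_pref :: "'x pref \<Rightarrow> bool" where
  "strict_pref P \<longleftrightarrow> (\<forall>x. \<not> P x x) \<and> (\<forall>x y z. P x y \<longrightarrow> P y z \<longrightarrow> P x z)
     \<and> (\<forall>x y. x \<noteq> y \<longrightarrow> P x y \<or> P y x)"

definition weak :: "'x pref \<Rightarrow> 'x \<Rightarrow> 'x \<Rightarrow> bool" where
  "weak P x y \<longleftrightarrow> x = y \<or> P x y"

definition profile :: "('a \<Rightarrow> 'x pref) \<Rightarrow> bool" where
  "profile P \<longleftrightarrow> (\<forall>a. strict_pref (P a))"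

type_synonym ('a, 'o) rule = "('a \<Rightarrow> 'o option pref) \<Rightarrow> 'a \<Rightarrow> 'o option"

definition individually_rational :: "('a, 'o) rule \<Rightarrow> bool" where
  "individually_rational \<phi> \<longleftrightarrow> (\<forall>P. profile P \<longrightarrow> (\<forall>a. weak (P a) (\<phi> P a) None))"

definition strategy_proof :: "('a, 'o) rule \<Rightarrow> bool" where
  "strategy_proof \<phi> \<longleftrightarrow> (\<forall>P a Pa'. profile P \<longrightarrow> strict_pref Pa' \<longrightarrow>
      weak (P a) (\<phi> P a) (\<phi> (P(a := Pa')) a))"

definition agrees_above :: "'x pref \<Rightarrow> 'x \<Rightarrow> 'x pref \<Rightarrow> bool" where
  "agrees_above P x P' \<longleftrightarrow> {y. P' y x} = {y. P y x} \<and>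
     (\<forall>y z. y \<in> insert x {w. P w x} \<longrightarrow> z \<in> insert x {w. P w x} \<longrightarrow> (P' y z \<longleftrightarrow> P y z))"

definition lower_set :: "('a \<Rightarrow> 'x pref) \<Rightarrow> ('a \<Rightarrow> 'x) \<Rightarrow> ('a \<Rightarrow> 'x pref) set" where
  "lower_set P \<mu> = {P'. profile P' \<and> (\<forall>a. agrees_above (P a) (\<mu> a) (P' a))}"

definition monotonic_discoverability :: "('a, 'o) rule \<Rightarrow> bool" where
  "monotonic_discoverability \<phi> \<longleftrightarrow> (\<forall>\<mu> P. profile P \<longrightarrow>
      \<phi> P = \<mu> \<or> (\<exists>a. \<forall>P' \<in> lower_set P \<mu>. \<phi> P' a \<noteq> \<mu> a))"

type_synonym 'x chist = "('x set \<times> 'x) list"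
type_synonym ('a, 'x) chistA = "'a \<Rightarrow> 'x chist"
type_synonym ('a, 'x) menufun = "('a, 'x) chistA \<Rightarrow> 'a \<Rightarrow> 'x set"
type_synonym 'x strategy = "'x chist \<Rightarrow> 'x set \<Rightarrow> 'x"

definition valid_chist :: "'x chist \<Rightarrow> bool" where
  "valid_chist hs \<longleftrightarrow> (\<forall>p \<in> set hs. snd p \<in> fst p)"

definition empty_hist :: "('a, 'x) chistA" where
  "empty_hist = (\<lambda>_. [])"

definition pao :: "('a, 'x) menufun \<Rightarrow> bool" where
  "pao S \<longleftrightarrow> (\<forall>a. S empty_hist a \<noteq> {}) \<and>
     (\<forall>h. h \<noteq> empty_hist \<longrightarrow> (\<forall>a. valid_chist (h a)) \<longrightarrow>
        (\<forall>a. h a \<noteq> [] \<longrightarrow> S h a \<subseteq> fst (last (h a)) - {snd (last (h a))}))"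

definition all_empty :: "('a, 'x) menufun \<Rightarrow> ('a, 'x) chistA \<Rightarrow> bool" where
  "all_empty S h \<longleftrightarrow> (\<forall>a. S h a = {})"

inductive reach :: "('a, 'x) menufun \<Rightarrow> ('a, 'x) chistA \<Rightarrow> bool" for S where
  init: "reach S empty_hist"
| move: "reach S h \<Longrightarrow> \<not> all_empty S h \<Longrightarrow> (\<forall>a. S h a \<noteq> {} \<longrightarrow> c a \<in> S h a) \<Longrightarrow>
     reach S (\<lambda>a. if S h a = {} then h a else h a @ [(S h a, c a)])"

definition step :: "('a, 'x) menufun \<Rightarrow> ('a \<Rightarrow> 'x strategy) \<Rightarrow> ('a, 'x) chistA \<Rightarrow> ('a, 'x) chistA" where
  "step S \<sigma> h = (\<lambda>a. if S h a = {} then h a else h a @ [(S h a, \<sigma> a (h a) (S h a))])"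

inductive outcome_rel :: "('a, 'x) menufun \<Rightarrow> ('a \<Rightarrow> 'x strategy) \<Rightarrow> ('a, 'x) chistA \<Rightarrow> ('a \<Rightarrow> 'x) \<Rightarrow> bool"
  for S \<sigma> where
  stop: "all_empty S h \<Longrightarrow> outcome_rel S \<sigma> h (\<lambda>a. snd (last (h a)))"
| go: "\<not> all_empty S h \<Longrightarrow> outcome_rel S \<sigma> (step S \<sigma> h) \<mu> \<Longrightarrow> outcome_rel S \<sigma> h \<mu>"

definition outcome :: "('a, 'x) menufun \<Rightarrow> ('a \<Rightarrow> 'x strategy) \<Rightarrow> ('a, 'x) chistA \<Rightarrow> 'a \<Rightarrow> 'x" where
  "outcome S \<sigma> h = (THE \<mu>. outcome_rel S \<sigma> h \<mu>)"

definition valid_strategy :: "'x strategy \<Rightarrow> bool" where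
  "valid_strategy \<sigma> \<longleftrightarrow> (\<forall>h \<Omega>. \<Omega> \<noteq> {} \<longrightarrow> \<sigma> h \<Omega> \<in> \<Omega>)"

definition best :: "'x pref \<Rightarrow> 'x set \<Rightarrow> 'x" where
  "best P \<Omega> = (THE x. x \<in> \<Omega> \<and> (\<forall>y \<in> \<Omega>. y \<noteq> x \<longrightarrow> P x y))"

definition straightforward :: "'x pref \<Rightarrow> 'x strategy" where
  "straightforward P = (\<lambda>h \<Omega>. best P \<Omega>)"

definition sequentializes :: "('a, 'o option) menufun \<Rightarrow> ('a, 'o) rule \<Rightarrow> bool" where
  "sequentializes S \<phi> \<longleftrightarrow> (\<forall>P. profile P \<longrightarrow>
      outcome S (\<lambda>a. straightforward (P a)) empty_hist = \<phi> P)"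

definition perfect_ex_post_eq :: "('a, 'o option) menufun \<Rightarrow> ('a \<Rightarrow> 'o option pref \<Rightarrow> 'o option strategy) \<Rightarrow> bool" where
  "perfect_ex_post_eq S \<Sigma> \<longleftrightarrow> (\<forall>a h \<sigma>' P. reach S h \<longrightarrow> valid_strategy \<sigma>' \<longrightarrow> profile P \<longrightarrow>
      weak (P a) (outcome S (\<lambda>b. \<Sigma> b (P b)) h a)
                 (outcome S ((\<lambda>b. \<Sigma> b (P b))(a := \<sigma>')) h a))"

definition pao_implementable_pepe :: "('a, 'o) rule \<Rightarrow> bool" where
  "pao_implementable_pepe \<phi> \<longleftrightarrow> (\<exists>S :: ('a, 'o option) menufun. pao S \<and> sequentializes S \<phi> \<and>
      perfect_ex_post_eq S (\<lambda>a. straightforward))"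

end

theory Submission
  imports Defs
begin

text \<open>
  Necessity: a perfect ex-post equilibrium at the initial history makes truthful straightforward
  play optimal, which is strategy-proofness; along the straightforward play of a sequentializing
  mechanism, every profile of a lower set plays identically until some agent is offered a menu
  lying entirely below her target object, and that agent witnesses monotonic discoverability.

  Sufficiency: under monotonic discoverability the rule is sequentialized by letting agents pick
  their favourite remaining objects one at a time, each stopping as soon as her current pick may be
  her assignment. Straightforward play is a perfect ex-post equilibrium of every sequentializing
  mechanism: after a history \<open>h\<close>, promote each agent's past choices at \<open>h\<close> to the top of her
  preference, and those of a deviator along her whole deviating play. Both the truthful and the
  deviating play then become straightforward plays from the start, so the rule assigns their
  outcomes, and strategy-proofness compares them.
\<close>

section \<open>Strict preferences\<close>

lemma strict_pref_irrefl: "strict_pref P \<Longrightarrow> \<not> P x x"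
  by (simp add: strict_pref_def)

lemma strict_pref_trans: "strict_pref P \<Longrightarrow> P x y \<Longrightarrow> P y z \<Longrightarrow> P x z"
  unfolding strict_pref_def by blast

lemma strict_pref_total: "strict_pref P \<Longrightarrow> x \<noteq> y \<Longrightarrow> P x y \<or> P y x"
  unfolding strict_pref_def by blast

lemma strict_pref_asym: "strict_pref P \<Longrightarrow> P x y \<Longrightarrow> \<not> P y x"
  unfolding strict_pref_def by blast

lemma best_eqI:
  assumes "strict_pref P" "x \<in> \<Omega>" "\<And>y. y \<in> \<Omega> \<Longrightarrow> y \<noteq> x \<Longrightarrow> P x y"
  shows "best P \<Omega> = x"
  unfolding best_def
proof (rule the_equality)
  show "x \<in> \<Omega> \<and> (\<forall>y\<in>\<Omega>. y \<noteq> x \<longrightarrow> P x y)"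
    using assms by blast
  fix z assume z: "z \<in> \<Omega> \<and> (\<forall>y\<in>\<Omega>. y \<noteq> z \<longrightarrow> P z y)"
  show "z = x"
  proof (rule ccontr)
    assume "z \<noteq> x"
    then have "P z x" "P x z" using z assms by auto
    then show False using strict_pref_asym[OF assms(1)] by blast
  qed
qed

lemma strict_pref_has_max:
  assumes "strict_pref P" "finite \<Omega>" "\<Omega> \<noteq> {}"
  shows "\<exists>x\<in>\<Omega>. \<forall>y\<in>\<Omega>. y \<noteq> x \<longrightarrow> P x y"
  using assms(2,3)
proof (induction \<Omega> rule: finite_ne_induct)
  case (singleton x)
  then show ?case by auto
next
  case (insert z F)
  then obtain x where x: "x \<in> F" "\<forall>y\<in>F. y \<noteq> x \<longrightarrow> P x y" by blast
  show ?case
  proof (cases "P x z")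
    case True
    then show ?thesis using x by auto
  next
    case False
    then have "P z x" using strict_pref_total[OF assms(1), of x z] insert(3) x(1) by auto
    then have "\<forall>y\<in>insert z F. y \<noteq> z \<longrightarrow> P z y"
      using x strict_pref_trans[OF assms(1)] by fastforce
    then show ?thesis by blast
  qed
qed

lemma best_max:
  fixes P :: "'x::finite pref"
  assumes "strict_pref P" "\<Omega> \<noteq> {}"
  shows "best P \<Omega> \<in> \<Omega>" and "y \<in> \<Omega> \<Longrightarrow> y \<noteq> best P \<Omega> \<Longrightarrow> P (best P \<Omega>) y"
proof -
  obtain x where "x \<in> \<Omega>" "\<forall>y\<in>\<Omega>. y \<noteq> x \<longrightarrow> P x y"
    using strict_pref_has_max[OF assms(1) finite assms(2)] by blast
  moreover have "best P \<Omega> = x"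
    using best_eqI[OF assms(1)] calculation by blast
  ultimately show "best P \<Omega> \<in> \<Omega>" and "y \<in> \<Omega> \<Longrightarrow> y \<noteq> best P \<Omega> \<Longrightarrow> P (best P \<Omega>) y"
    by auto
qed

lemma best_cong: "(\<And>x y. x \<in> \<Omega> \<Longrightarrow> y \<in> \<Omega> \<Longrightarrow> P x y = Q x y) \<Longrightarrow> best P \<Omega> = best Q \<Omega>"
  unfolding best_def by (rule arg_cong[where f = The]) auto

text \<open>A menu containing an object weakly above \<open>m\<close> has its best element above \<open>m\<close>, where
  the two preferences agree.\<close>

lemma best_agrees_above:
  fixes P :: "'x::finite pref"
  assumes sP: "strict_pref P" and sP': "strict_pref P'" and agree: "agrees_above P m P'"
    and above: "y \<in> \<Omega>" "y = m \<or> P y m"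
  shows "best P' \<Omega> = best P \<Omega>"
proof -
  define b where "b = best P \<Omega>"
  have b: "b \<in> \<Omega>" "\<And>z. z \<in> \<Omega> \<Longrightarrow> z \<noteq> b \<Longrightarrow> P b z"
    using best_max[OF sP] above(1) b_def by auto
  have bm: "b = m \<or> P b m"
    using above b strict_pref_trans[OF sP] by metis
  have up: "{y. P' y m} = {y. P y m}"
    and ord: "\<And>y z. y \<in> insert m {w. P w m} \<Longrightarrow> z \<in> insert m {w. P w m} \<Longrightarrow> P' y z = P y z"
    using agree unfolding agrees_above_def by auto
  have "P' b z" if z: "z \<in> \<Omega>" "z \<noteq> b" for z
  proof (cases "z \<in> insert m {w. P w m}")
    case True
    then show ?thesis using ord[of b z] bm b z by auto
  next
    case False
    then have "P' m z" using up strict_pref_total[OF sP'] by blast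
    moreover have "b = m \<or> P' b m" using bm ord[of b m] by auto
    ultimately show ?thesis using strict_pref_trans[OF sP'] by blast
  qed
  then show ?thesis using best_eqI[OF sP' b(1)] b_def by simp
qed

lemma straightforward_valid:
  "strict_pref (P :: 'x::finite pref) \<Longrightarrow> valid_strategy (straightforward P)"
  unfolding valid_strategy_def straightforward_def using best_max(1) by blast

fun promote :: "'x list \<Rightarrow> 'x pref \<Rightarrow> 'x pref" where
  "promote [] P = P"
| "promote (c # cs) P = (\<lambda>x y. (x = c \<and> y \<noteq> c) \<or> (x \<noteq> c \<and> y \<noteq> c \<and> promote cs P x y))"

lemma strict_pref_promote: "strict_pref P \<Longrightarrow> strict_pref (promote cs P)"
proof (induction cs)
  case Nil
  then show ?case by simp
next
  case (Cons c cs)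
  then have s: "strict_pref (promote cs P)" by simp
  have "\<not> promote (c # cs) P x x" for x
    using strict_pref_irrefl[OF s] by simp
  moreover have "promote (c # cs) P x z" if "promote (c # cs) P x y" "promote (c # cs) P y z" for x y z
    using that strict_pref_trans[OF s, of x y z] by auto
  moreover have "promote (c # cs) P x y \<or> promote (c # cs) P y x" if "x \<noteq> y" for x y
    using that strict_pref_total[OF s, of x y] by auto
  ultimately show ?case
    unfolding strict_pref_def by blast
qed

lemma promote_outside: "x \<notin> set cs \<Longrightarrow> y \<notin> set cs \<Longrightarrow> promote cs P x y = P x y"
  by (induction cs) auto

lemma best_promote_disjoint: "\<Omega> \<inter> set cs = {} \<Longrightarrow> best (promote cs P) \<Omega> = best P \<Omega>"
  by (rule best_cong) (simp add: disjoint_iff promote_outside)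

section \<open>Histories and plays\<close>

text \<open>Under a PAO menu function, every later menu of an agent with history \<open>hs\<close> lies in
  \<open>available hs\<close>.\<close>

definition available :: "'x chist \<Rightarrow> 'x set" where
  "available hs = (if hs = [] then UNIV else fst (last hs) - {snd (last hs)})"

definition last_choice :: "('a, 'x) chistA \<Rightarrow> 'a \<Rightarrow> 'x" where
  "last_choice h = (\<lambda>a. snd (last (h a)))"

fun never_reoffered :: "'x chist \<Rightarrow> bool" where
  "never_reoffered [] = True"
| "never_reoffered ((\<Omega>, c) # r) = (c \<in> \<Omega> \<and> (\<forall>e\<in>set r. c \<notin> fst e) \<and> never_reoffered r)"

lemma available_snoc: "available (hs @ [(\<Omega>, c)]) = \<Omega> - {c}"
  by (simp add: available_def)

lemma never_reoffered_snoc: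
  "never_reoffered (hs @ [(\<Omega>, c)]) \<longleftrightarrow> never_reoffered hs \<and> c \<in> \<Omega> \<and> (\<forall>e\<in>set hs. snd e \<notin> \<Omega>)"
  by (induction hs rule: never_reoffered.induct) auto

lemma never_reoffered_valid: "never_reoffered hs \<Longrightarrow> valid_chist hs"
  unfolding valid_chist_def by (induction hs rule: never_reoffered.induct) auto

lemma chosen_not_available: "never_reoffered hs \<Longrightarrow> x \<in> set (map snd hs) \<Longrightarrow> x \<notin> available hs"
  by (cases hs rule: rev_cases) (fastforce simp: never_reoffered_snoc available_snoc)+

lemma best_promote_history:
  "strict_pref P \<Longrightarrow> never_reoffered hs \<Longrightarrow> e \<in> set hs \<Longrightarrow> best (promote (map snd hs) P) (fst e) = snd e"
proof (induction hs arbitrary: e rule: never_reoffered.induct)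
  case 1
  then show ?case by simp
next
  case (2 \<Omega> c r)
  show ?case
  proof (cases "e = (\<Omega>, c)")
    case True
    have "best (promote (map snd ((\<Omega>, c) # r)) P) \<Omega> = c"
      by (rule best_eqI[OF strict_pref_promote[OF 2(2)]]) (use 2 in auto)
    then show ?thesis using True by simp
  next
    case False
    then have e: "e \<in> set r" "c \<notin> fst e" using 2 by auto
    then have "best (promote (map snd ((\<Omega>, c) # r)) P) (fst e) = best (promote (map snd r) P) (fst e)"
      by (intro best_cong) auto
    then show ?thesis using 2 e by auto
  qed
qed

definition valid_strategies :: "('a \<Rightarrow> 'x strategy) \<Rightarrow> bool" where
  "valid_strategies \<sigma> \<longleftrightarrow> (\<forall>b. valid_strategy (\<sigma> b))"

lemma straightforward_valid_strategies:
  "profile (P :: 'a \<Rightarrow> 'x::finite pref) \<Longrightarrow> valid_strategies (\<lambda>b. straightforward (P b))"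
  unfolding valid_strategies_def profile_def using straightforward_valid by metis

lemma step_choice_in_menu:
  "valid_strategies \<sigma> \<Longrightarrow> S h a \<noteq> {} \<Longrightarrow> \<sigma> a (h a) (S h a) \<in> S h a"
  by (simp add: valid_strategies_def valid_strategy_def)

lemma reach_step: "reach S h \<Longrightarrow> \<not> all_empty S h \<Longrightarrow> valid_strategies \<sigma> \<Longrightarrow> reach S (step S \<sigma> h)"
  unfolding step_def
  by (rule reach.move[where c = "\<lambda>b. \<sigma> b (h b) (S h b)"]) (auto intro: step_choice_in_menu)

lemma menu_subset_available:
  assumes "pao S" "\<forall>b. valid_chist (h b)"
  shows "S h a \<subseteq> available (h a)"
proof (cases "h a = []")
  case True
  then show ?thesis by (simp add: available_def)
next
  case False
  then have "h \<noteq> empty_hist" by (auto simp: empty_hist_def)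
  with assms have "S h a \<subseteq> fst (last (h a)) - {snd (last (h a))}"
    using False unfolding pao_def by blast
  then show ?thesis using False by (simp add: available_def)
qed

lemma reach_never_reoffered:
  assumes "pao S"
  shows "reach S h \<Longrightarrow> never_reoffered (h b)"
proof (induction arbitrary: b rule: reach.induct)
  case init
  then show ?case by (simp add: empty_hist_def)
next
  case (move h c)
  have "S h b \<subseteq> available (h b)"
    using menu_subset_available[OF assms] move.IH never_reoffered_valid by blast
  then have "\<forall>e\<in>set (h b). snd e \<notin> S h b"
    using chosen_not_available[OF move.IH, of _ b] by auto
  then show ?case
    using move.IH[of b] move.hyps(3) by (simp add: never_reoffered_snoc)
qed

lemma reach_menu_available: "pao S \<Longrightarrow> reach S h \<Longrightarrow> S h a \<subseteq> available (h a)"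
  by (simp add: menu_subset_available reach_never_reoffered never_reoffered_valid)

inductive play :: "('a, 'x) menufun \<Rightarrow> ('a \<Rightarrow> 'x strategy) \<Rightarrow> ('a, 'x) chistA \<Rightarrow> ('a, 'x) chistA \<Rightarrow> bool"
  for S \<sigma> where
  stop: "all_empty S h \<Longrightarrow> play S \<sigma> h h"
| go: "\<not> all_empty S h \<Longrightarrow> play S \<sigma> (step S \<sigma> h) hf \<Longrightarrow> play S \<sigma> h hf"

lemma outcome_rel_unique: "outcome_rel S \<sigma> h \<mu> \<Longrightarrow> outcome_rel S \<sigma> h \<mu>' \<Longrightarrow> \<mu>' = \<mu>"
proof (induction arbitrary: \<mu>' rule: outcome_rel.induct)
  case (stop h)
  from stop(2) show ?case by (cases rule: outcome_rel.cases) (use stop in auto)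
next
  case (go h \<mu>)
  from go.prems show ?case
    by (cases rule: outcome_rel.cases) (use go.hyps go.IH in blast)+
qed

lemma play_outcome: "play S \<sigma> h hf \<Longrightarrow> outcome S \<sigma> h = last_choice hf"
proof -
  assume "play S \<sigma> h hf"
  then have "outcome_rel S \<sigma> h (last_choice hf)"
    by (induction rule: play.induct) (auto simp: last_choice_def intro: outcome_rel.intros)
  then show ?thesis
    unfolding outcome_def using outcome_rel_unique by (metis the_equality)
qed

lemma play_terminal: "play S \<sigma> h hf \<Longrightarrow> all_empty S hf"
  by (induction rule: play.induct) auto

lemma play_reach: "play S \<sigma> h hf \<Longrightarrow> reach S h \<Longrightarrow> valid_strategies \<sigma> \<Longrightarrow> reach S hf"
  by (induction rule: play.induct) (auto intro: reach_step)

text \<open>Every play terminates: each step strictly shrinks the available set of some agent.\<close>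

lemma play_exists:
  fixes S :: "('a::finite, 'x::finite) menufun"
  assumes pao: "pao S" and "reach S h" and \<sigma>: "valid_strategies \<sigma>"
  shows "\<exists>hf. play S \<sigma> h hf"
  using assms(2)
proof (induction "\<Sum>b\<in>UNIV. card (available (h b))" arbitrary: h rule: less_induct)
  case less
  show ?case
  proof (cases "all_empty S h")
    case True
    then show ?thesis using play.stop by blast
  next
    case False
    define h' where "h' = step S \<sigma> h"
    have shrink: "available (h' b) \<subset> available (h b)" if "S h b \<noteq> {}" for b
      using that reach_menu_available[OF pao less.prems] step_choice_in_menu[of \<sigma> S h b] \<sigma>
      by (auto simp: h'_def step_def available_snoc)
    have "card (available (h' b)) \<le> card (available (h b))" for b
    proof (cases "S h b = {}")
      case True
      then show ?thesis by (simp add: h'_def step_def)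
    next
      case False
      then show ?thesis using shrink[of b] by (simp add: psubset_card_mono less_imp_le)
    qed
    moreover obtain b0 where "S h b0 \<noteq> {}"
      using False by (auto simp: all_empty_def)
    then have "card (available (h' b0)) < card (available (h b0))"
      using shrink by (simp add: psubset_card_mono)
    ultimately have "(\<Sum>b\<in>UNIV. card (available (h' b))) < (\<Sum>b\<in>UNIV. card (available (h b)))"
      by (intro sum_strict_mono_ex1) auto
    moreover have "reach S h'"
      using reach_step[OF less.prems False \<sigma>] h'_def by simp
    ultimately obtain hf where "play S \<sigma> h' hf"
      using less.hyps by blast
    then show ?thesis using play.go False h'_def by blast
  qed
qed

lemma play_extends:
  assumes "pao S"
  shows "play S \<sigma> g hf \<Longrightarrow> reach S g \<Longrightarrow> valid_strategies \<sigma> \<Longrightarrow>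
    \<exists>rest. hf b = g b @ rest \<and>
      (\<forall>e\<in>set rest. fst e \<subseteq> available (g b) \<and> fst e \<noteq> {} \<and> (\<exists>k. snd e = \<sigma> b k (fst e)))"
proof (induction rule: play.induct)
  case (stop h)
  then show ?case by auto
next
  case (go h hf)
  obtain rest where rest: "hf b = step S \<sigma> h b @ rest"
    "\<forall>e\<in>set rest. fst e \<subseteq> available (step S \<sigma> h b) \<and> fst e \<noteq> {} \<and> (\<exists>k. snd e = \<sigma> b k (fst e))"
    using go reach_step by blast
  have sub: "S h b \<subseteq> available (h b)"
    using reach_menu_available[OF assms go.prems(1)] .
  show ?case
  proof (cases "S h b = {}")
    case True
    then show ?thesis using rest by (auto simp: step_def)
  next
    case False
    then have "hf b = h b @ ((S h b, \<sigma> b (h b) (S h b)) # rest)"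
      using rest(1) by (simp add: step_def)
    moreover have "available (step S \<sigma> h b) \<subseteq> available (h b)"
      using False sub by (auto simp: step_def available_snoc)
    ultimately show ?thesis using rest(2) sub False by auto
  qed
qed

lemma play_last_choice_in_menu:
  assumes pao: "pao S" and "play S \<sigma> g hf" "reach S g" and \<sigma>: "valid_strategies \<sigma>" and ne: "S g a \<noteq> {}"
  shows "last_choice hf a \<in> S g a"
proof -
  have "\<not> all_empty S g" using ne by (auto simp: all_empty_def)
  from assms(2) have "play S \<sigma> (step S \<sigma> g) hf"
    by (cases rule: play.cases) (use \<open>\<not> all_empty S g\<close> in auto)
  moreover have "reach S (step S \<sigma> g)"
    using reach_step assms \<open>\<not> all_empty S g\<close> by blast
  ultimately obtain rest where rest: "hf a = g a @ [(S g a, \<sigma> a (g a) (S g a))] @ rest"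
    "\<forall>e\<in>set rest. fst e \<subseteq> S g a - {\<sigma> a (g a) (S g a)} \<and> fst e \<noteq> {} \<and> (\<exists>k. snd e = \<sigma> a k (fst e))"
    using play_extends[OF pao _ _ \<sigma>, of "step S \<sigma> g" hf a] ne by (auto simp: step_def available_snoc)
  show ?thesis
  proof (cases "rest = []")
    case True
    then show ?thesis using rest step_choice_in_menu[of \<sigma> S g a] \<sigma> ne by (simp add: last_choice_def)
  next
    case False
    then have "last rest \<in> set rest" by simp
    then obtain k where "snd (last rest) = \<sigma> a k (fst (last rest))" "fst (last rest) \<noteq> {}"
      and "fst (last rest) \<subseteq> S g a"
      using rest(2) by blast
    then have "snd (last rest) \<in> fst (last rest)" "fst (last rest) \<subseteq> S g a"
      using \<sigma> by (auto simp: valid_strategies_def valid_strategy_def)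
    then show ?thesis using rest(1) False by (auto simp: last_choice_def)
  qed
qed

lemma play_deviation:
  assumes pao: "pao S"
  shows "play S \<sigma>1 g hf1 \<Longrightarrow> play S \<sigma>2 g hf2 \<Longrightarrow> reach S g \<Longrightarrow>
    valid_strategies \<sigma>1 \<Longrightarrow> valid_strategies \<sigma>2 \<Longrightarrow> (\<forall>b. b \<noteq> a \<longrightarrow> \<sigma>1 b = \<sigma>2 b) \<Longrightarrow>
    last_choice hf1 a = last_choice hf2 a \<or>
    (last_choice hf1 a \<in> available (g a) \<and> last_choice hf2 a \<in> available (g a))"
proof (induction arbitrary: hf2 rule: play.induct)
  case (stop h)
  from stop.prems(1) have "hf2 = h"
    by (cases rule: play.cases) (use stop.hyps in auto)
  then show ?case by simp
next
  case (go h hf)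
  show ?case
  proof (cases "S h a = {}")
    case True
    have same_step: "step S \<sigma>2 h = step S \<sigma>1 h"
    proof
      fix b
      show "step S \<sigma>2 h b = step S \<sigma>1 h b"
        using True go.prems(5) by (cases "b = a") (simp_all add: step_def)
    qed
    from go.prems(1) have "play S \<sigma>2 (step S \<sigma>1 h) hf2"
      by (cases rule: play.cases) (use go.hyps(1) same_step in auto)
    moreover have "reach S (step S \<sigma>1 h)"
      using reach_step go.hyps(1) go.prems(2,3) by blast
    moreover have "step S \<sigma>1 h a = h a"
      using True by (simp add: step_def)
    ultimately show ?thesis
      using go.IH go.prems(3-5) by simp
  next
    case False
    have "play S \<sigma>1 h hf"
      using go.hyps play.go by blast
    then have "last_choice hf a \<in> S h a" "last_choice hf2 a \<in> S h a"
      using play_last_choice_in_menu[OF pao _ go.prems(2) _ False] go.prems(1,3,4) by blast+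
    then show ?thesis
      using reach_menu_available[OF pao go.prems(2)] by blast
  qed
qed

lemma outcome_in_menu:
  fixes S :: "('a::finite, 'x::finite) menufun"
  assumes "pao S" "reach S h" "valid_strategies \<sigma>" "S h a \<noteq> {}"
  shows "outcome S \<sigma> h a \<in> S h a"
  using play_exists[OF assms(1-3)] play_last_choice_in_menu[OF assms(1) _ assms(2-4)] play_outcome
  by metis

lemma outcome_step:
  fixes S :: "('a::finite, 'x::finite) menufun"
  assumes pao: "pao S" and h: "reach S h" and \<sigma>: "valid_strategies \<sigma>" and go: "\<not> all_empty S h"
  shows "outcome S \<sigma> (step S \<sigma> h) = outcome S \<sigma> h"
proof -
  obtain hf where "play S \<sigma> (step S \<sigma> h) hf"
    using play_exists[OF pao reach_step[OF h go \<sigma>] \<sigma>] by blast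
  then show ?thesis
    using play_outcome play.go[OF go] by metis
qed

definition straightforward_history :: "('a \<Rightarrow> 'x pref) \<Rightarrow> ('a, 'x) chistA \<Rightarrow> bool" where
  "straightforward_history Q h \<longleftrightarrow> (\<forall>b. \<forall>e\<in>set (h b). best (Q b) (fst e) = snd e)"

lemma straightforward_history_play_from_start:
  "reach S g \<Longrightarrow> straightforward_history Q g \<Longrightarrow> play S (\<lambda>b. straightforward (Q b)) g hf \<Longrightarrow>
    play S (\<lambda>b. straightforward (Q b)) empty_hist hf"
proof (induction rule: reach.induct)
  case init
  then show ?case by simp
next
  case (move h c)
  let ?g = "\<lambda>a. if S h a = {} then h a else h a @ [(S h a, c a)]"
  have best_g: "best (Q b) (fst e) = snd e" if "e \<in> set (?g b)" for b e
    using move.prems(1) that unfolding straightforward_history_def by blast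
  have "straightforward_history Q h"
    unfolding straightforward_history_def using best_g by simp
  moreover have "step S (\<lambda>b. straightforward (Q b)) h = ?g"
  proof
    fix b
    have "S h b \<noteq> {} \<Longrightarrow> best (Q b) (S h b) = c b"
      using best_g[of "(S h b, c b)" b] by simp
    then show "step S (\<lambda>b. straightforward (Q b)) h b = ?g b"
      by (simp add: step_def straightforward_def)
  qed
  then have "play S (\<lambda>b. straightforward (Q b)) h hf"
    using play.go[OF move.hyps(2)] move.prems(2) by simp
  ultimately show ?case using move.IH by blast
qed

lemma sequentializes_straightforward_history:
  assumes seq: "sequentializes S \<phi>" and h: "reach S h" and play: "play S \<sigma> h hf"
    and \<sigma>: "valid_strategies \<sigma>" and Q: "profile Q" and hf: "straightforward_history Q hf"
  shows "\<phi> Q = last_choice hf"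
proof -
  have "play S (\<lambda>b. straightforward (Q b)) empty_hist hf"
    using straightforward_history_play_from_start[OF play_reach[OF play h \<sigma>] hf]
      play.stop[OF play_terminal[OF play]] by blast
  then show ?thesis
    using seq Q play_outcome unfolding sequentializes_def by metis
qed

section \<open>Strategy-proofness yields a perfect ex-post equilibrium\<close>

lemma play_straightforward_history_promoted:
  fixes P :: "'a \<Rightarrow> 'x::finite pref"
  assumes pao: "pao S" and h: "reach S h" and play: "play S \<sigma> h hf" and \<sigma>: "valid_strategies \<sigma>"
    and \<sigma>b: "\<sigma> b = straightforward (P b)" and sP: "strict_pref (P b)" and e: "e \<in> set (hf b)"
  shows "best (promote (map snd (h b)) (P b)) (fst e) = snd e"
proof (cases "e \<in> set (h b)")
  case True
  then show ?thesis
    using best_promote_history[OF sP reach_never_reoffered[OF pao h]] by blast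
next
  case False
  obtain rest where "hf b = h b @ rest"
    and "\<forall>e\<in>set rest. fst e \<subseteq> available (h b) \<and> fst e \<noteq> {} \<and> (\<exists>k. snd e = \<sigma> b k (fst e))"
    using play_extends[OF pao play h \<sigma>] by blast
  with False e obtain k where k: "snd e = \<sigma> b k (fst e)" "fst e \<subseteq> available (h b)"
    by auto
  then have "fst e \<inter> set (map snd (h b)) = {}"
    using chosen_not_available[OF reach_never_reoffered[OF pao h]] by blast
  then show ?thesis
    using k \<sigma>b by (simp add: best_promote_disjoint straightforward_def)
qed

lemma play_deviation_straightforward_history:
  fixes P :: "'a \<Rightarrow> 'x::finite pref"
  assumes pao: "pao S" and h: "reach S h" and play: "play S \<sigma> h hf" and \<sigma>: "valid_strategies \<sigma>"
    and P: "profile P" and others: "\<And>b. b \<noteq> a \<Longrightarrow> \<sigma> b = straightforward (P b)"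
  shows "straightforward_history
    ((\<lambda>b. promote (map snd (h b)) (P b))(a := promote (map snd (hf a)) (P a))) hf"
  unfolding straightforward_history_def
proof (intro allI ballI)
  fix b e assume e: "e \<in> set (hf b)"
  have sP: "strict_pref (P b)"
    using P by (simp add: profile_def)
  show "best (((\<lambda>b. promote (map snd (h b)) (P b))(a := promote (map snd (hf a)) (P a))) b) (fst e)
      = snd e"
  proof (cases "b = a")
    case True
    then show ?thesis
      using best_promote_history[OF sP reach_never_reoffered[OF pao play_reach[OF play h \<sigma>]] e] by simp
  next
    case False
    then show ?thesis
      using play_straightforward_history_promoted[where P = P and b = b, OF pao h play \<sigma> others sP e]
      by simp
  qed
qed

lemma weak_promote_available:
  assumes "never_reoffered hs" "x \<in> available hs" "y \<in> available hs"
    and "weak (promote (map snd hs) P) x y"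
  shows "weak P x y"
  using assms chosen_not_available promote_outside unfolding weak_def by metis

text \<open>The deviator's promoted preference agrees with her true one on the objects still available
  to her at \<open>h\<close>, where both outcomes lie unless they coincide.\<close>

lemma strategy_proof_perfect_ex_post_eq:
  fixes S :: "('a::finite, 'o::finite option) menufun" and \<phi> :: "('a, 'o) rule"
  assumes pao: "pao S" and seq: "sequentializes S \<phi>" and sp: "strategy_proof \<phi>"
  shows "perfect_ex_post_eq S (\<lambda>a. straightforward)"
  unfolding perfect_ex_post_eq_def
proof (intro allI impI)
  fix a h and \<sigma>' :: "'o option strategy" and P :: "'a \<Rightarrow> 'o option pref"
  assume h: "reach S h" and \<sigma>': "valid_strategy \<sigma>'" and P: "profile P"
  define \<sigma> where "\<sigma> = (\<lambda>b. straightforward (P b))"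
  have v\<sigma>: "valid_strategies \<sigma>" and v\<sigma>': "valid_strategies (\<sigma>(a := \<sigma>'))"
    using straightforward_valid_strategies[OF P] \<sigma>' by (simp_all add: valid_strategies_def \<sigma>_def)
  obtain hf0 hf1 where hf0: "play S \<sigma> h hf0" and hf1: "play S (\<sigma>(a := \<sigma>')) h hf1"
    using play_exists[OF pao h v\<sigma>] play_exists[OF pao h v\<sigma>'] by blast
  define Ph where "Ph = (\<lambda>b. promote (map snd (h b)) (P b))"
  define Qa where "Qa = promote (map snd (hf1 a)) (P a)"
  have Ph: "profile Ph" and Qa: "strict_pref Qa" and PhQa: "profile (Ph(a := Qa))"
    using P strict_pref_promote by (auto simp: profile_def Ph_def Qa_def)
  have "straightforward_history Ph hf0"
    using play_straightforward_history_promoted[OF pao h hf0 v\<sigma>] P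
    by (simp add: straightforward_history_def profile_def Ph_def \<sigma>_def)
  then have truthful: "\<phi> Ph = last_choice hf0"
    using sequentializes_straightforward_history[OF seq h hf0 v\<sigma> Ph] by blast
  have "straightforward_history (Ph(a := Qa)) hf1"
    using play_deviation_straightforward_history[OF pao h hf1 v\<sigma>' P] by (simp add: Ph_def Qa_def \<sigma>_def)
  then have deviation: "\<phi> (Ph(a := Qa)) = last_choice hf1"
    using sequentializes_straightforward_history[OF seq h hf1 v\<sigma>' PhQa] by blast
  have "weak (Ph a) (last_choice hf0 a) (last_choice hf1 a)"
    using sp Ph Qa truthful deviation unfolding strategy_proof_def by metis
  moreover have "last_choice hf0 a = last_choice hf1 a \<or>
      (last_choice hf0 a \<in> available (h a) \<and> last_choice hf1 a \<in> available (h a))"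
    using play_deviation[OF pao hf0 hf1 h v\<sigma> v\<sigma>'] by simp
  ultimately have "weak (P a) (last_choice hf0 a) (last_choice hf1 a)"
    using weak_promote_available[OF reach_never_reoffered[OF pao h]]
    unfolding Ph_def by (auto simp: weak_def)
  then show "weak (P a) (outcome S (\<lambda>b. straightforward (P b)) h a)
      (outcome S ((\<lambda>b. straightforward (P b))(a := \<sigma>')) h a)"
    using play_outcome[OF hf0] play_outcome[OF hf1] by (simp add: \<sigma>_def)
qed

section \<open>Necessity of strategy-proofness and monotonic discoverability\<close>

lemma perfect_ex_post_eq_strategy_proof:
  fixes \<phi> :: "('a, 'o::finite) rule"
  assumes seq: "sequentializes S \<phi>" and eq: "perfect_ex_post_eq S (\<lambda>a. straightforward)"
  shows "strategy_proof \<phi>"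
  unfolding strategy_proof_def
proof (intro allI impI)
  fix P :: "'a \<Rightarrow> 'o option pref" and a :: 'a and Pa' :: "'o option pref"
  assume P: "profile P" and Pa': "strict_pref Pa'"
  have "(\<lambda>b. straightforward (P b))(a := straightforward Pa') = (\<lambda>b. straightforward ((P(a := Pa')) b))"
    by auto
  moreover have "profile (P(a := Pa'))"
    using P Pa' by (simp add: profile_def)
  moreover have "weak (P a) (outcome S (\<lambda>b. straightforward (P b)) empty_hist a)
      (outcome S ((\<lambda>b. straightforward (P b))(a := straightforward Pa')) empty_hist a)"
    using eq reach.init straightforward_valid[OF Pa'] P unfolding perfect_ex_post_eq_def by blast
  ultimately show "weak (P a) (\<phi> P a) (\<phi> (P(a := Pa')) a)"
    using seq P unfolding sequentializes_def by metis
qed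

lemma step_straightforward_lower_set:
  fixes P :: "'a \<Rightarrow> 'x::finite pref"
  assumes P: "profile P" and P': "P' \<in> lower_set P \<mu>"
    and above: "\<And>b. S h b \<noteq> {} \<Longrightarrow> \<exists>y\<in>S h b. y = \<mu> b \<or> P b y (\<mu> b)"
  shows "step S (\<lambda>b. straightforward (P' b)) h = step S (\<lambda>b. straightforward (P b)) h"
proof
  fix b
  have "best (P' b) (S h b) = best (P b) (S h b)" if ne: "S h b \<noteq> {}"
  proof -
    obtain y where "y \<in> S h b" "y = \<mu> b \<or> P b y (\<mu> b)"
      using above[OF ne] by blast
    moreover have "strict_pref (P b)" "strict_pref (P' b)" "agrees_above (P b) (\<mu> b) (P' b)"
      using P P' by (auto simp: profile_def lower_set_def)
    ultimately show ?thesis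
      using best_agrees_above by blast
  qed
  then show "step S (\<lambda>b. straightforward (P' b)) h b = step S (\<lambda>b. straightforward (P b)) h b"
    by (simp add: step_def straightforward_def)
qed

lemma play_discovers:
  fixes S :: "('a::finite, 'x::finite) menufun"
  assumes pao: "pao S" and P: "profile P"
  shows "play S (\<lambda>b. straightforward (P b)) g hf \<Longrightarrow> reach S g \<Longrightarrow> last_choice hf \<noteq> \<mu> \<Longrightarrow>
    \<exists>a. \<forall>P'\<in>lower_set P \<mu>. outcome S (\<lambda>b. straightforward (P' b)) g a \<noteq> \<mu> a"
proof (induction rule: play.induct)
  case (stop h)
  then obtain a where "last_choice h a \<noteq> \<mu> a" by auto
  moreover have "outcome S \<sigma> h = last_choice h" for \<sigma>
    using play_outcome play.stop[OF stop.hyps] by metis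
  ultimately show ?case by metis
next
  case (go h hf)
  have sP: "strict_pref (P b)" for b
    using P by (simp add: profile_def)
  have v: "valid_strategies (\<lambda>b. straightforward (P' b))" if "P' \<in> lower_set P \<mu>" for P'
    using that straightforward_valid_strategies by (auto simp: lower_set_def)
  show ?case
  proof (cases "\<exists>a. S h a \<noteq> {} \<and> (\<forall>y\<in>S h a. P a (\<mu> a) y)")
    case True
    then obtain a where a: "S h a \<noteq> {}" "\<forall>y\<in>S h a. P a (\<mu> a) y" by blast
    have "P a (\<mu> a) (outcome S (\<lambda>b. straightforward (P' b)) h a)" if L: "P' \<in> lower_set P \<mu>" for P'
      using outcome_in_menu[OF pao go.prems(1) v[OF L] a(1)] a(2) by blast
    then show ?thesis
      using strict_pref_irrefl[OF sP] by metis
  next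
    case False
    then have above: "S h b \<noteq> {} \<Longrightarrow> \<exists>y\<in>S h b. y = \<mu> b \<or> P b y (\<mu> b)" for b
      using strict_pref_total[OF sP] by blast
    define h' where "h' = step S (\<lambda>b. straightforward (P b)) h"
    have "reach S h'"
      using reach_step[OF go.prems(1) go.hyps(1) straightforward_valid_strategies[OF P]] h'_def by simp
    then obtain a where a: "\<forall>P'\<in>lower_set P \<mu>. outcome S (\<lambda>b. straightforward (P' b)) h' a \<noteq> \<mu> a"
      using go.IH go.prems(2) h'_def by blast
    have "outcome S (\<lambda>b. straightforward (P' b)) h = outcome S (\<lambda>b. straightforward (P' b)) h'"
      if L: "P' \<in> lower_set P \<mu>" for P'
      using outcome_step[OF pao go.prems(1) v[OF L] go.hyps(1)] step_straightforward_lower_set[where S = S and h = h, OF P L above]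
      by (simp add: h'_def)
    then show ?thesis
      using a by auto
  qed
qed

lemma sequentializes_monotonic_discoverability:
  fixes \<phi> :: "('a::finite, 'o::finite) rule"
  assumes pao: "pao S" and seq: "sequentializes S \<phi>"
  shows "monotonic_discoverability \<phi>"
  unfolding monotonic_discoverability_def
proof (intro allI impI)
  fix \<mu> and P :: "'a \<Rightarrow> 'o option pref"
  assume P: "profile P"
  obtain hf where hf: "play S (\<lambda>b. straightforward (P b)) empty_hist hf"
    using play_exists[OF pao reach.init straightforward_valid_strategies[OF P]] by blast
  have "last_choice hf = \<phi> P"
    using play_outcome[OF hf] seq P unfolding sequentializes_def by metis
  moreover have "\<phi> P' = outcome S (\<lambda>b. straightforward (P' b)) empty_hist" if "P' \<in> lower_set P \<mu>" for P'
    using seq that unfolding sequentializes_def lower_set_def by simp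
  ultimately show "\<phi> P = \<mu> \<or> (\<exists>a. \<forall>P'\<in>lower_set P \<mu>. \<phi> P' a \<noteq> \<mu> a)"
    using play_discovers[OF pao P hf reach.init] by metis
qed

section \<open>A mechanism sequentializing a monotonically discoverable rule\<close>

definition top_segment :: "'x pref \<Rightarrow> 'x list \<Rightarrow> bool" where
  "top_segment Q cs \<longleftrightarrow> sorted_wrt Q cs \<and> (\<forall>c\<in>set cs. \<forall>y. y \<notin> set cs \<longrightarrow> Q c y)"

lemma set_butlast_last: "cs \<noteq> [] \<Longrightarrow> set cs = insert (last cs) (set (butlast cs))"
  by (induction cs) auto

lemma top_segment_above_last:
  assumes Q: "strict_pref Q" and top: "top_segment Q cs" and ne: "cs \<noteq> []"
  shows "{y. Q y (last cs)} = set (butlast cs)"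
proof
  have "sorted_wrt Q (butlast cs @ [last cs])"
    using top ne by (simp add: top_segment_def)
  then show "set (butlast cs) \<subseteq> {y. Q y (last cs)}"
    by (auto simp: sorted_wrt_append)
  show "{y. Q y (last cs)} \<subseteq> set (butlast cs)"
  proof
    fix y assume y: "y \<in> {y. Q y (last cs)}"
    have "y \<in> set cs"
    proof (rule ccontr)
      assume "y \<notin> set cs"
      then have "Q (last cs) y"
        using top ne by (auto simp: top_segment_def)
      then show False
        using y strict_pref_asym[OF Q] by auto
    qed
    moreover have "y \<noteq> last cs"
      using y strict_pref_irrefl[OF Q] by auto
    ultimately show "y \<in> set (butlast cs)"
      using set_butlast_last[OF ne] by auto
  qed
qed

lemma top_segment_agrees_above:
  assumes P: "strict_pref P" and P': "strict_pref P'"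
    and top: "top_segment P cs" and top': "top_segment P' cs" and ne: "cs \<noteq> []"
  shows "agrees_above P (last cs) P'"
  unfolding agrees_above_def
proof (intro conjI allI impI)
  show "{y. P' y (last cs)} = {y. P y (last cs)}"
    using top_segment_above_last[OF P top ne] top_segment_above_last[OF P' top' ne] by simp
  have segment: "insert (last cs) {w. P w (last cs)} = set cs"
    using top_segment_above_last[OF P top ne] set_butlast_last[OF ne] by simp
  fix y z
  assume "y \<in> insert (last cs) {w. P w (last cs)}" "z \<in> insert (last cs) {w. P w (last cs)}"
  then obtain i j where ij: "i < length cs" "j < length cs" "y = cs ! i" "z = cs ! j"
    using segment by (metis in_set_conv_nth)
  have sorted: "P (cs ! i) (cs ! j)" "P' (cs ! i) (cs ! j)" if "i < j" "j < length cs" for i j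
    using top top' that by (auto simp: top_segment_def sorted_wrt_iff_nth_less)
  consider "i < j" | "i = j" | "j < i" by linarith
  then show "P' y z = P y z"
  proof cases
    case 1
    then show ?thesis using sorted ij by auto
  next
    case 2
    then show ?thesis using ij strict_pref_irrefl[OF P] strict_pref_irrefl[OF P'] by auto
  next
    case 3
    then show ?thesis using sorted ij strict_pref_asym[OF P] strict_pref_asym[OF P'] by blast
  qed
qed

lemma top_segment_snoc_best:
  fixes Q :: "'x::finite pref"
  assumes Q: "strict_pref Q" and top: "top_segment Q cs" and ne: "UNIV - set cs \<noteq> {}"
  shows "top_segment Q (cs @ [best Q (UNIV - set cs)])"
  using top best_max[OF Q ne]
  unfolding top_segment_def by (auto simp: sorted_wrt_append)

text \<open>Every agent picks her favourite remaining object, one at a time, and keeps picking until some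
  profile that ranks all picks made so far on top, in their order, would assign her the current
  pick.\<close>

definition discovery_mech :: "('a, 'o) rule \<Rightarrow> ('a, 'o option) menufun" where
  "discovery_mech \<phi> h a =
    (if h = empty_hist then UNIV
     else if h a \<noteq> [] \<and> (\<forall>P'. profile P' \<and> (\<forall>b. top_segment (P' b) (map snd (h b))) \<longrightarrow>
                                  \<phi> P' a \<noteq> snd (last (h a)))
     then available (h a) else {})"

lemma pao_discovery_mech: "pao (discovery_mech \<phi>)"
  unfolding pao_def by (auto simp: discovery_mech_def available_def)

definition discovery_invariant :: "('a, 'o) rule \<Rightarrow> ('a \<Rightarrow> 'o option pref) \<Rightarrow> ('a, 'o option) chistA \<Rightarrow> bool" where
  "discovery_invariant \<phi> P g \<longleftrightarrow> (\<forall>b. g b \<noteq> [] \<and> top_segment (P b) (map snd (g b)) \<and>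
     available (g b) = UNIV - set (map snd (g b)) \<and> \<phi> P b \<notin> set (butlast (map snd (g b))))"

lemma discovery_invariant_start:
  fixes P :: "'a \<Rightarrow> 'o::finite option pref"
  assumes P: "profile P"
  shows "discovery_invariant \<phi> P (step (discovery_mech \<phi>) (\<lambda>b. straightforward (P b)) empty_hist)"
proof -
  have "top_segment (P b) [best (P b) UNIV]" for b
    using top_segment_snoc_best[of "P b" "[]"] P by (simp add: profile_def top_segment_def)
  then show ?thesis
    by (simp add: discovery_invariant_def step_def discovery_mech_def straightforward_def
        empty_hist_def available_def)
qed

lemma discovery_invariant_step:
  fixes P :: "'a \<Rightarrow> 'o::finite option pref"
  assumes P: "profile P" and inv: "discovery_invariant \<phi> P g"
  shows "discovery_invariant \<phi> P (step (discovery_mech \<phi>) (\<lambda>b. straightforward (P b)) g)"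
  unfolding discovery_invariant_def
proof
  fix b
  let ?g' = "step (discovery_mech \<phi>) (\<lambda>b. straightforward (P b)) g"
  define cs where "cs = map snd (g b)"
  have gb: "g b \<noteq> []" "top_segment (P b) cs" "available (g b) = UNIV - set cs"
    "\<phi> P b \<notin> set (butlast cs)"
    using inv cs_def by (auto simp: discovery_invariant_def)
  then have "g \<noteq> empty_hist"
    by (auto simp: empty_hist_def)
  show "?g' b \<noteq> [] \<and> top_segment (P b) (map snd (?g' b)) \<and>
      available (?g' b) = UNIV - set (map snd (?g' b)) \<and> \<phi> P b \<notin> set (butlast (map snd (?g' b)))"
  proof (cases "discovery_mech \<phi> g b = {}")
    case True
    then show ?thesis using inv by (simp add: step_def discovery_invariant_def)
  next
    case False
    let ?continues = "\<forall>P'. profile P' \<and> (\<forall>b. top_segment (P' b) (map snd (g b))) \<longrightarrow>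
                        \<phi> P' b \<noteq> snd (last (g b))"
    have mech: "discovery_mech \<phi> g b = (if ?continues then available (g b) else {})"
      using \<open>g \<noteq> empty_hist\<close> gb(1) by (simp add: discovery_mech_def)
    then have continues: ?continues and menu: "discovery_mech \<phi> g b = UNIV - set cs"
      using False gb(3) by (cases ?continues; simp)+
    have "\<phi> P b \<noteq> last cs"
      using continues P inv gb(1) by (simp add: discovery_invariant_def last_map cs_def)
    then have "\<phi> P b \<notin> set cs"
      using gb(1,4) set_butlast_last[of cs] by (auto simp: cs_def)
    moreover have "top_segment (P b) (cs @ [best (P b) (UNIV - set cs)])"
      using top_segment_snoc_best[of "P b" cs] gb(2) P False menu by (simp add: profile_def)
    ultimately show ?thesis
      using False menu by (auto simp: step_def straightforward_def available_snoc cs_def)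
  qed
qed

text \<open>At a terminal history every agent has stopped: if the picks were not \<open>\<phi> P\<close>, monotonic
  discoverability would name an agent that no profile ranking the picks on top assigns her last
  pick, so she would not have stopped unless she had exhausted all objects, including \<open>\<phi> P a\<close>.\<close>

lemma discovery_invariant_terminal:
  fixes P :: "'a \<Rightarrow> 'o option pref"
  assumes md: "monotonic_discoverability \<phi>" and P: "profile P"
    and inv: "discovery_invariant \<phi> P g" and terminal: "all_empty (discovery_mech \<phi>) g"
  shows "last_choice g = \<phi> P"
proof (rule ccontr)
  have gb: "g b \<noteq> []" "top_segment (P b) (map snd (g b))"
    "available (g b) = UNIV - set (map snd (g b))" "\<phi> P b \<notin> set (butlast (map snd (g b)))" for b
    using inv by (auto simp: discovery_invariant_def)
  have last_g: "last_choice g b = last (map snd (g b))" for b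
    using gb(1) by (simp add: last_choice_def last_map)
  assume "last_choice g \<noteq> \<phi> P"
  then obtain a where a: "\<forall>P'\<in>lower_set P (last_choice g). \<phi> P' a \<noteq> last_choice g a"
    using md P unfolding monotonic_discoverability_def by metis
  have "\<phi> P' a \<noteq> snd (last (g a))"
    if P': "profile P'" "\<forall>b. top_segment (P' b) (map snd (g b))" for P'
  proof -
    have "agrees_above (P b) (last_choice g b) (P' b)" for b
      using top_segment_agrees_above[of "P b" "P' b" "map snd (g b)"] gb(1,2) P P' last_g
      by (simp add: profile_def)
    then have "P' \<in> lower_set P (last_choice g)"
      using P' by (simp add: lower_set_def)
    then show ?thesis
      using a by (simp add: last_choice_def)
  qed
  moreover have "g \<noteq> empty_hist"
    using gb(1) by (auto simp: empty_hist_def)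
  ultimately have "discovery_mech \<phi> g a = available (g a)"
    using gb(1) by (simp add: discovery_mech_def)
  then have "set (map snd (g a)) = UNIV"
    using terminal gb(3) by (auto simp: all_empty_def)
  moreover have "P \<in> lower_set P (last_choice g)"
    using P by (simp add: lower_set_def agrees_above_def)
  then have "\<phi> P a \<notin> set (map snd (g a))"
    using a gb(1,4) last_g set_butlast_last[of "map snd (g a)"] by auto
  ultimately show False
    by simp
qed

lemma sequentializes_discovery_mech:
  fixes \<phi> :: "('a::finite, 'o::finite) rule"
  assumes md: "monotonic_discoverability \<phi>"
  shows "sequentializes (discovery_mech \<phi>) \<phi>"
  unfolding sequentializes_def
proof (intro allI impI)
  fix P :: "'a \<Rightarrow> 'o option pref" assume P: "profile P"
  let ?\<sigma> = "\<lambda>b. straightforward (P b)"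
  obtain hf where hf: "play (discovery_mech \<phi>) ?\<sigma> empty_hist hf"
    using play_exists[OF pao_discovery_mech reach.init straightforward_valid_strategies[OF P]] by blast
  have "last_choice hf = \<phi> P"
    if "play (discovery_mech \<phi>) ?\<sigma> g hf" "discovery_invariant \<phi> P g" for g
    using that
  proof (induction rule: play.induct)
    case (stop h)
    then show ?case using discovery_invariant_terminal[OF md P] by blast
  next
    case (go h hf)
    then show ?case using discovery_invariant_step[OF P] by blast
  qed
  moreover have "\<not> all_empty (discovery_mech \<phi>) empty_hist"
    by (simp add: all_empty_def discovery_mech_def)
  from hf this have "play (discovery_mech \<phi>) ?\<sigma> (step (discovery_mech \<phi>) ?\<sigma> empty_hist) hf"
    by (cases rule: play.cases) auto
  ultimately show "outcome (discovery_mech \<phi>) ?\<sigma> empty_hist = \<phi> P"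
    using play_outcome[OF hf] discovery_invariant_start[OF P] by simp
qed

text \<open>The argument does not use individual rationality.\<close>

theorem theorem2:
  fixes \<phi> :: "('a::finite, 'o::finite) rule"
  assumes "individually_rational \<phi>"
  shows "(pao_implementable_pepe \<phi> \<longleftrightarrow> strategy_proof \<phi> \<and> monotonic_discoverability \<phi>)
    \<and> (pao_implementable_pepe \<phi> \<longrightarrow>
        (\<forall>S :: ('a, 'o option) menufun. pao S \<and> sequentializes S \<phi> \<longrightarrow>
            perfect_ex_post_eq S (\<lambda>a. straightforward)))"
proof -
  have necessary: "strategy_proof \<phi> \<and> monotonic_discoverability \<phi>"
    if "pao_implementable_pepe \<phi>"
    using that perfect_ex_post_eq_strategy_proof sequentializes_monotonic_discoverability
    unfolding pao_implementable_pepe_def by blast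
  have sufficient: "pao_implementable_pepe \<phi>"
    if "strategy_proof \<phi>" "monotonic_discoverability \<phi>"
    using pao_discovery_mech sequentializes_discovery_mech[OF that(2)]
      strategy_proof_perfect_ex_post_eq[OF pao_discovery_mech _ that(1)]
    unfolding pao_implementable_pepe_def by blast
  show ?thesis
    using necessary sufficient strategy_proof_perfect_ex_post_eq by blast
qed

end
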